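(* Let $|B(\vec\lambda,\Phi)\rangle$ be a balanced state with $\vec\lambda=(\lambda_1,\lambda_2,\lambda_3)$, and fix a context $(A,B,C)$ of equatorial measurement angles in $[0,\pi)$ on qubits $1,2,3$. Then: 1. For a given $c\in\{0,1\}$, if one of the events $(A,B,C)\to(0,0,c)$, $(A,B,C)\to(1,1,c)$ is impossible, then the other is impossible if and only if $\delta(\lambda_1,A)\equiv\delta(\lambda_2,B)\equiv\pi$. 2. For a given $c\in\{0,1\}$, if one of the events $(A,B,C)\to(0,1,c)$, $(A,B,C)\to(1,0,c)$ is impossible, then the other is impossible if and only if $\delta(\lambda_1,A)\equiv\delta(\lambda_2,B)$. The analogous statements hold for any other pair of qubits (with the outcome of the remaining qubit fixed and the corresponding $\lambda_i$ and angles).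
   Context: $\equiv$ denotes equality modulo $2\pi$. For $\lambda\in[0,\frac{\pi}{2})$ let $|v_\lambda\rangle=\cos\frac{\lambda}{2}|0\rangle+\sin\frac{\lambda}{2}|1\rangle$, $|w_\lambda\rangle=\sin\frac{\lambda}{2}|0\rangle+\cos\frac{\lambda}{2}|1\rangle$. A balanced state is $|B(\vec\lambda,\Phi)\rangle=\frac{1}{\sqrt2}(|v_{\lambda_1}\rangle|v_{\lambda_2}\rangle|v_{\lambda_3}\rangle+e^{i\Phi}|w_{\lambda_1}\rangle|w_{\lambda_2}\rangle|w_{\lambda_3}\rangle)$ with $\lambda_i\in[0,\frac{\pi}{2})$, $\Phi\in[0,2\pi)$. The equatorial measurement with angle $\varphi$ is $E_\varphi=\cos\varphi X+\sin\varphi Y$, with $+1$ eigenvector $|\varphi\rangle=\frac{1}{\sqrt2}(|0\rangle+e^{i\varphi}|1\rangle)$ and $-1$ eigenvector $|\varphi+\pi\rangle$; outcomes $+1,-1$ are relabelled $0,1$. The event $(A,B,C)\to(a,b,c)$ is impossible if $(\langle A+a\pi|\otimes\langle B+b\pi|\otimes\langle C+c\pi|)|B(\vec\lambda,\Phi)\rangle=0$. Define modulo $2\pi$: $\beta(\lambda,\varphi)=\varphi-2\arctan\left(\frac{\cos\frac{\lambda}{2}\sin\varphi}{\sin\frac{\lambda}{2}+\cos\frac{\lambda}{2}\cos\varphi}\right)$ and $\delta(\lambda,\varphi)=\beta(\lambda,\varphi+\pi)-\beta(\lambda,\varphi)\equiv\pi-2\arctan(\sin\varphi\tan\lambda)$.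 *)

theory Defs
  imports Complex_Main
begin

definition cong2pi :: "real \<Rightarrow> real \<Rightarrow> bool" where
  "cong2pi x y \<longleftrightarrow> (\<exists>k::int. x - y = 2 * pi * of_int k)"

text \<open>Qubit states as coefficient pairs (amplitude of |0>, amplitude of |1>).\<close>
definition vstate :: "real \<Rightarrow> complex \<times> complex" where
  "vstate l = (complex_of_real (cos (l/2)), complex_of_real (sin (l/2)))"

definition wstate :: "real \<Rightarrow> complex \<times> complex" where
  "wstate l = (complex_of_real (sin (l/2)), complex_of_real (cos (l/2)))"

definition eqstate :: "real \<Rightarrow> complex \<times> complex" where
  "eqstate phi = (complex_of_real (1 / sqrt 2), cis phi / complex_of_real (sqrt 2))"

definition braket :: "complex \<times> complex \<Rightarrow> complex \<times> complex \<Rightarrow> complex" where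
  "braket u x = cnj (fst u) * fst x + cnj (snd u) * snd x"

text \<open>Amplitude (<A+a pi| (x) <B+b pi| (x) <C+c pi|) |B(lambda,Phi)>, qubits indexed 0,1,2;
  lam q = lambda of qubit q, ang q = measurement angle of qubit q, out q = outcome in {0,1}.\<close>
definition amplitude :: "(nat \<Rightarrow> real) \<Rightarrow> real \<Rightarrow> (nat \<Rightarrow> real) \<Rightarrow> (nat \<Rightarrow> nat) \<Rightarrow> complex" where
  "amplitude lam Phi ang out =
     (1 / complex_of_real (sqrt 2)) *
     ((\<Prod>q<3. braket (eqstate (ang q + real (out q) * pi)) (vstate (lam q)))
      + cis Phi * (\<Prod>q<3. braket (eqstate (ang q + real (out q) * pi)) (wstate (lam q))))"

definition impossible :: "(nat \<Rightarrow> real) \<Rightarrow> real \<Rightarrow> (nat \<Rightarrow> real) \<Rightarrow> (nat \<Rightarrow> nat) \<Rightarrow> bool" where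
  "impossible lam Phi ang out \<longleftrightarrow> amplitude lam Phi ang out = 0"

text \<open>delta(lambda,phi) = beta(lambda,phi+pi) - beta(lambda,phi), in the closed form given
  in the paper (modulo 2 pi): pi - 2 arctan(sin phi tan lambda).\<close>
definition delta :: "real \<Rightarrow> real \<Rightarrow> real" where
  "delta l phi = pi - 2 * arctan (sin phi * tan l)"

definition outc :: "nat \<Rightarrow> nat \<Rightarrow> nat \<Rightarrow> nat \<Rightarrow> nat \<Rightarrow> nat \<Rightarrow> nat" where
  "outc i j a b c = (\<lambda>q. if q = i then a else if q = j then b else c)"

end

theory Submission
  imports Defs
begin

(* For each qubit the amplitude ratio rho_k = <phi + k pi|w_lambda> / <phi + k pi|v_lambda> is
   well defined, and flipping the outcome k multiplies it by e^(i delta(lambda, phi)): with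
   z = e^(-i phi), c = cos(lambda/2), s = sin(lambda/2) one has
   (s - z c)(c + z s) = -z (cos lambda - i sin lambda sin phi),
   (c - z s)(s + z c) = z (cos lambda + i sin lambda sin phi), and
   -(1 - i u)/(1 + i u) = e^(i (pi - 2 arctan u)).
   An event is impossible iff e^(i Phi) rho_1 rho_2 rho_3 = -1.  So once one event of a pair is
   impossible, the other one is impossible iff e^(i delta_1) e^(i delta_2) = 1 (outcomes 00, 11)
   or e^(i delta_1) = e^(i delta_2) (outcomes 01, 10); as 0 < delta <= pi for angles in [0, pi),
   the former means delta_1 = delta_2 = pi. *)

lemma mult_eq_minus_one_iff_same_factor:
  fixes z u w :: "'a::field"
  assumes "z * u = -1"
  shows "z * w = -1 \<longleftrightarrow> w = u"
proof -
  from assms have "z \<noteq> 0" by auto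
  then show ?thesis by (simp add: assms[symmetric])
qed

definition amp_v :: "real \<Rightarrow> real \<Rightarrow> nat \<Rightarrow> complex" where
  "amp_v l phi k = braket (eqstate (phi + real k * pi)) (vstate l)"

definition amp_w :: "real \<Rightarrow> real \<Rightarrow> nat \<Rightarrow> complex" where
  "amp_w l phi k = braket (eqstate (phi + real k * pi)) (wstate l)"

lemma cis_minus_add_nat_pi: "cis (- (phi + real k * pi)) = (-1) ^ k * cis (- phi)"
proof -
  have "cis (- (phi + real k * pi)) = cis (- phi) * cis (- pi) ^ k"
    by (simp add: DeMoivre cis_mult)
  moreover have "cis (- pi) = -1" by (simp add: complex_eq_iff)
  ultimately show ?thesis by simp
qed

lemma braket_eqstate:
  "braket (eqstate phi) (p, q) = (p + cis (- phi) * q) / sqrt 2"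
  by (simp add: braket_def eqstate_def cis_cnj field_simps)

lemma amp_v_eq:
  "amp_v l phi k =
     (complex_of_real (cos (l/2)) + (-1) ^ k * cis (- phi) * complex_of_real (sin (l/2))) / sqrt 2"
  unfolding amp_v_def vstate_def braket_eqstate cis_minus_add_nat_pi by simp

lemma amp_w_eq:
  "amp_w l phi k =
     (complex_of_real (sin (l/2)) + (-1) ^ k * cis (- phi) * complex_of_real (cos (l/2))) / sqrt 2"
  unfolding amp_w_def wstate_def braket_eqstate cis_minus_add_nat_pi by simp

lemma amp_cross_products:
  "amp_w l phi 1 * amp_v l phi 0 =
     - cis (- phi) * (complex_of_real (cos l) - \<i> * complex_of_real (sin l * sin phi)) / 2"
  "amp_v l phi 1 * amp_w l phi 0 =
     cis (- phi) * (complex_of_real (cos l) + \<i> * complex_of_real (sin l * sin phi)) / 2"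
  using cos_double[of "l/2"] sin_double[of "l/2"]
  unfolding amp_v_eq amp_w_eq complex_eq_iff
  by (simp, use sin_cos_squared_add[of phi] in algebra)+

lemma half_angle_sin_less_cos:
  assumes "0 \<le> l" "l < pi/2"
  shows "0 \<le> sin (l/2)" "sin (l/2) < cos (l/2)"
proof -
  show s: "0 \<le> sin (l/2)" using assms by (intro sin_ge_zero) auto
  have c: "0 < cos (l/2)" using assms by (intro cos_gt_zero_pi) auto
  have "0 < cos l" using assms by (intro cos_gt_zero_pi) auto
  then have "sin (l/2)^2 < cos (l/2)^2" using cos_double[of "l/2"] by simp
  then show "sin (l/2) < cos (l/2)" using c s power_mono[of "cos (l/2)" "sin (l/2)" 2] by linarith
qed

lemma amp_v_nonzero:
  assumes "0 \<le> l" "l < pi/2"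
  shows "amp_v l phi k \<noteq> 0"
proof -
  define z where "z = (-1) ^ k * cis (- phi) * complex_of_real (sin (l/2))"
  have "norm z = sin (l/2)" "norm (complex_of_real (cos (l/2))) = cos (l/2)"
    "sin (l/2) < cos (l/2)"
    using half_angle_sin_less_cos[OF assms] by (simp_all add: z_def norm_mult norm_power)
  then have "0 < norm (complex_of_real (cos (l/2)) + z)"
    using norm_diff_ineq[of "complex_of_real (cos (l/2))" z] by linarith
  then show ?thesis by (simp add: amp_v_eq z_def)
qed

lemma cis_pi_minus_double_arctan: "cis (pi - 2 * arctan u) * (1 + \<i> * u) = - (1 - \<i> * u)"
proof -
  define t where "t = arctan u"
  have "cos t > 0" unfolding t_def by (simp add: cos_arctan add_pos_nonneg)
  moreover have "u = sin t / cos t" unfolding t_def by (metis tan_arctan tan_def)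
  ultimately have "cis t = cos t * (1 + \<i> * u)" "cis (- t) = cos t * (1 - \<i> * u)"
    by (simp_all add: complex_eq_iff field_simps)
  moreover have "cis (- 2 * t) * cis t = cis (- t)" by (simp add: cis_mult)
  ultimately have "cos t * (cis (- 2 * t) * (1 + \<i> * u)) = cos t * (1 - \<i> * u)"
    by (simp add: algebra_simps)
  with \<open>cos t > 0\<close> have "cis (- 2 * t) * (1 + \<i> * u) = 1 - \<i> * u" by simp
  moreover have "cis (pi - 2 * t) = - cis (- 2 * t)" by (simp add: minus_cis)
  ultimately show ?thesis unfolding t_def by simp
qed

lemma cis_delta_mult:
  assumes "cos l \<noteq> 0"
  shows "cis (delta l phi) * (complex_of_real (cos l) + \<i> * complex_of_real (sin l * sin phi))
    = - (complex_of_real (cos l) - \<i> * complex_of_real (sin l * sin phi))"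
proof -
  define u where "u = sin phi * tan l"
  have "complex_of_real (cos l) + \<i> * complex_of_real (sin l * sin phi) = cos l * (1 + \<i> * u)"
    "complex_of_real (cos l) - \<i> * complex_of_real (sin l * sin phi) = cos l * (1 - \<i> * u)"
    using assms by (simp_all add: u_def tan_def complex_eq_iff)
  moreover have "cis (delta l phi) * (1 + \<i> * u) = - (1 - \<i> * u)"
    unfolding delta_def u_def by (rule cis_pi_minus_double_arctan)
  ultimately show ?thesis by (metis mult.left_commute mult_minus_right)
qed

definition amp_ratio :: "real \<Rightarrow> real \<Rightarrow> nat \<Rightarrow> complex" where
  "amp_ratio l phi k = amp_w l phi k / amp_v l phi k"

lemma amp_ratio_flip:
  assumes "0 \<le> l" "l < pi/2"
  shows "amp_ratio l phi 1 = cis (delta l phi) * amp_ratio l phi 0"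
proof -
  have "cos l \<noteq> 0" using assms cos_gt_zero_pi[of l] by simp
  have "amp_w l phi 1 * amp_v l phi 0 =
      cis (- phi) * - (complex_of_real (cos l) - \<i> * complex_of_real (sin l * sin phi)) / 2"
    unfolding amp_cross_products by (simp add: algebra_simps)
  also have "\<dots> = cis (- phi) * (cis (delta l phi) *
      (complex_of_real (cos l) + \<i> * complex_of_real (sin l * sin phi))) / 2"
    unfolding cis_delta_mult[OF \<open>cos l \<noteq> 0\<close>] ..
  also have "\<dots> = cis (delta l phi) * (amp_v l phi 1 * amp_w l phi 0)"
    unfolding amp_cross_products by simp
  finally have
    "amp_w l phi 1 * amp_v l phi 0 = cis (delta l phi) * (amp_v l phi 1 * amp_w l phi 0)" .
  with amp_v_nonzero[OF assms] show ?thesis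
    unfolding amp_ratio_def by (simp add: field_simps)
qed

lemma delta_pos_le_pi:
  assumes "0 \<le> l" "l < pi/2" "0 \<le> phi" "phi < pi"
  shows "0 < delta l phi" "delta l phi \<le> pi"
proof -
  have "0 \<le> sin phi" using assms by (intro sin_ge_zero) auto
  moreover have "0 \<le> tan l" using assms tan_gt_zero[of l] by (cases "l = 0") auto
  ultimately have "0 \<le> arctan (sin phi * tan l)" by simp
  with arctan_ubound[of "sin phi * tan l"]
  show "0 < delta l phi" "delta l phi \<le> pi" by (simp_all add: delta_def)
qed

lemma cis_eq_iff_cong2pi: "cis a = cis b \<longleftrightarrow> cong2pi a b"
proof -
  have "cis a = cis b \<longleftrightarrow> sin a = sin b \<and> cos a = cos b" by (auto simp: complex_eq_iff)
  also have "\<dots> \<longleftrightarrow> (\<exists>n::int. a = b + 2 * pi * n)" by (rule sin_cos_eq_iff)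
  also have "\<dots> \<longleftrightarrow> cong2pi a b" by (auto simp: cong2pi_def algebra_simps)
  finally show ?thesis .
qed

lemma cong2pi_pi_iff:
  assumes "0 < d" "d \<le> pi"
  shows "cong2pi d pi \<longleftrightarrow> d = pi"
proof
  assume "cong2pi d pi"
  then obtain k :: int where k: "d - pi = 2 * pi * k" unfolding cong2pi_def by blast
  with assms have "0 < pi * (2 * k + 1)" "pi * k \<le> 0" by (simp_all add: algebra_simps)
  then have "0 < 2 * k + 1" "k \<le> 0"
    using pi_gt_zero by (simp_all add: zero_less_mult_iff mult_le_0_iff)
  then have "k = 0" by linarith
  with k show "d = pi" by simp
qed (simp add: cong2pi_def)

lemma cis_mult_eq_one_iff:
  assumes "0 < d1" "d1 \<le> pi" "0 < d2" "d2 \<le> pi"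
  shows "cis d1 * cis d2 = 1 \<longleftrightarrow> d1 = pi \<and> d2 = pi"
proof
  assume "cis d1 * cis d2 = 1"
  then have "cos (d1 + d2) = 1" by (simp add: cis_mult complex_eq_iff)
  then obtain n :: int where n: "d1 + d2 = of_int n * 2 * pi" using cos_one_2pi_int by blast
  with assms have "0 < n * 2 * pi" "n * 2 * pi \<le> 2 * pi" by linarith+
  then have "0 < n" "n \<le> 1" by (auto simp: zero_less_mult_iff)
  then have "n = 1" by linarith
  with n assms show "d1 = pi \<and> d2 = pi" by simp
qed (simp add: cis_mult)

lemma prod_lessThan_3_distinct:
  fixes g :: "nat \<Rightarrow> 'a::comm_monoid_mult"
  assumes "i < 3" "j < 3" "i \<noteq> j"
  shows "(\<Prod>q<3. g q) = g i * g j * g (3 - i - j)"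
proof -
  have "3 - i - j \<noteq> i" "3 - i - j \<noteq> j" using assms by arith+
  moreover have "{..<3::nat} = {i, j, 3 - i - j}" using assms by auto
  ultimately show ?thesis using assms by (simp add: mult.assoc)
qed

lemma impossible_iff_amp_ratio:
  assumes lam: "\<forall>q<3. 0 \<le> lam q \<and> lam q < pi / 2" and ij: "i < 3" "j < 3" "i \<noteq> j"
  defines "k \<equiv> 3 - i - j"
  shows "impossible lam Phi ang (outc i j a b c) \<longleftrightarrow>
    cis Phi * (amp_ratio (lam i) (ang i) a * amp_ratio (lam j) (ang j) b *
               amp_ratio (lam k) (ang k) c) = -1"
proof -
  have "k < 3" "k \<noteq> i" "k \<noteq> j" using ij unfolding k_def by arith+
  then have out: "outc i j a b c i = a" "outc i j a b c j = b" "outc i j a b c k = c"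
    using ij by (auto simp: outc_def)
  define V where "V = amp_v (lam i) (ang i) a * amp_v (lam j) (ang j) b * amp_v (lam k) (ang k) c"
  define W where "W = amp_w (lam i) (ang i) a * amp_w (lam j) (ang j) b * amp_w (lam k) (ang k) c"
  have "amp_v (lam q) (ang q) n \<noteq> 0" if "q < 3" for q n
    using lam that amp_v_nonzero by blast
  then have "V \<noteq> 0" using ij \<open>k < 3\<close> by (simp add: V_def)
  have "amplitude lam Phi ang (outc i j a b c) = (V + cis Phi * W) / sqrt 2"
    unfolding amplitude_def amp_v_def[symmetric] amp_w_def[symmetric] V_def W_def
      prod_lessThan_3_distinct[OF ij] k_def[symmetric] out by simp
  then have "impossible lam Phi ang (outc i j a b c) \<longleftrightarrow> V + cis Phi * W = 0"
    by (simp add: impossible_def)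
  also have "\<dots> \<longleftrightarrow> cis Phi * (W / V) = -1"
    using \<open>V \<noteq> 0\<close> by (simp add: field_simps add_eq_0_iff)
  finally show ?thesis by (simp add: V_def W_def amp_ratio_def)
qed

theorem lemma8:
  fixes lam ang :: "nat \<Rightarrow> real" and Phi :: real
  assumes "\<forall>q<3. 0 \<le> lam q \<and> lam q < pi / 2"
    and "\<forall>q<3. 0 \<le> ang q \<and> ang q < pi"
    and "0 \<le> Phi" and "Phi < 2 * pi"
  shows "\<forall>i j c. i < 3 \<and> j < 3 \<and> i \<noteq> j \<and> c \<in> {0, 1} \<longrightarrow>
     ((impossible lam Phi ang (outc i j 0 0 c) \<longrightarrow>
         (impossible lam Phi ang (outc i j 1 1 c) \<longleftrightarrow>
            cong2pi (delta (lam i) (ang i)) pi \<and> cong2pi (delta (lam j) (ang j)) pi)) \<and>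
      (impossible lam Phi ang (outc i j 1 1 c) \<longrightarrow>
         (impossible lam Phi ang (outc i j 0 0 c) \<longleftrightarrow>
            cong2pi (delta (lam i) (ang i)) pi \<and> cong2pi (delta (lam j) (ang j)) pi)) \<and>
      (impossible lam Phi ang (outc i j 0 1 c) \<longrightarrow>
         (impossible lam Phi ang (outc i j 1 0 c) \<longleftrightarrow>
            cong2pi (delta (lam i) (ang i)) (delta (lam j) (ang j)))) \<and>
      (impossible lam Phi ang (outc i j 1 0 c) \<longrightarrow>
         (impossible lam Phi ang (outc i j 0 1 c) \<longleftrightarrow>
            cong2pi (delta (lam i) (ang i)) (delta (lam j) (ang j)))))"
proof (intro allI impI, goal_cases)
  case (1 i j c)
  then have ij: "i < 3" "j < 3" "i \<noteq> j" by auto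
  define di dj where "di = delta (lam i) (ang i)" and "dj = delta (lam j) (ang j)"
  define E where "E = cis Phi * (amp_ratio (lam i) (ang i) 0 * amp_ratio (lam j) (ang j) 0 *
    amp_ratio (lam (3 - i - j)) (ang (3 - i - j)) c)"
  have flip: "amp_ratio (lam i) (ang i) 1 = cis di * amp_ratio (lam i) (ang i) 0"
    "amp_ratio (lam j) (ang j) 1 = cis dj * amp_ratio (lam j) (ang j) 0"
    using assms(1) ij amp_ratio_flip by (simp_all add: di_def dj_def)
  have "0 < di" "di \<le> pi" "0 < dj" "dj \<le> pi"
    using assms(1,2) ij delta_pos_le_pi by (simp_all add: di_def dj_def)
  then have both: "cis di * cis dj = 1 \<longleftrightarrow> cong2pi di pi \<and> cong2pi dj pi"
    by (simp add: cis_mult_eq_one_iff cong2pi_pi_iff)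
  have same: "cis di = cis dj \<longleftrightarrow> cong2pi di dj" by (rule cis_eq_iff_cong2pi)
  note imp = impossible_iff_amp_ratio[OF assms(1) ij, of Phi ang _ _ c]
  have "impossible lam Phi ang (outc i j 0 0 c) \<longleftrightarrow> E = -1"
    "impossible lam Phi ang (outc i j 1 1 c) \<longleftrightarrow> E * (cis di * cis dj) = -1"
    "impossible lam Phi ang (outc i j 0 1 c) \<longleftrightarrow> E * cis dj = -1"
    "impossible lam Phi ang (outc i j 1 0 c) \<longleftrightarrow> E * cis di = -1"
    unfolding imp flip E_def by (simp_all only: ac_simps mult_1_left mult_1_right)
  then show ?case
    unfolding di_def[symmetric] dj_def[symmetric] both[symmetric] same[symmetric]
    using mult_eq_minus_one_iff_same_factor[of E] by (metis mult_1_right)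
qed

end
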